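(* Let $G$ be an undirected graph on vertex set $[m]$ with symmetric adjacency matrix $\mathcal{A}\in\{0,1\}^{m\times m}$, each vertex $i$ having a single attribute value $a_i\in[K]$ with one-hot encoding $h_i\in\{0,1\}^K$. Let $W\in\mathbb{R}^{r\times K}$, $f_i=Wh_i$, let $S:\mathbb{R}^r\times\mathbb{R}^r\to\mathbb{R}$ be any function, and let $\mathbf{S}\in\mathbb{R}^{m\times m}$ have entries $\mathbf{S}_{ji}=S(f_j,f_i)$. Let $F_{(1)}\in\mathbb{R}^{r\times m}$ be the matrix with columns $f_1,\dots,f_m$, and for $n\ge2$ let $F_{(n)}=\big(F_{(n-1)}(\mathcal{A}\odot\mathbf{S})\big)\odot F_{(1)}$; let $f_{(n)}=F_{(n)}\mathbf{1}$ with $\mathbf{1}\in\mathbb{R}^m$ the all-ones vector. Then for every $n\ge1$, $$f_{(n)}=W^{[n]}\,\Lambda_{(n)}\,c_{(n)}(G),$$ and consequently, for every $T\ge1$, $f_{[T]}=\mathcal{M}\Lambda c_{[T]}(G)$, where $f_{[T]}$ is the concatenation $[f_{(1)};\dots;f_{(T)}]$, $c_{[T]}$ is the concatenation $[c_{(1)};\dots;c_{(T)}]$, $\mathcal{M}$ is block-diagonal with diagonal blocks $W^{[1]},\dots,W^{[T]}$, and $\Lambda$ is block-diagonal with diagonal blocks $\Lambda_{(1)},\dots,\Lambda_{(T)}$.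
   Context: For $u\in[K]$ let $W(u)$ be the $u$-th column of $W$. A walk of length $n$ is a sequence of vertices $(p_1,\dots,p_n)$ with $\mathcal{A}_{p_k,p_{k+1}}=1$ for all $k<n$; its walk type is $(a_{p_1},\dots,a_{p_n})\in[K]^n$. The walk statistics vector $c_{(n)}(G)\in\mathbb{R}^{K^n}$ has entries indexed by walk types $v\in[K]^n$, the entry at $v$ being the number of walks of length $n$ in $G$ of type $v$. The walk weight of $v=(v_1,\dots,v_n)$ is $\lambda(v)=\prod_{k=1}^{n-1}S\big(W(v_{k+1}),W(v_k)\big)$ (equal to $1$ if $n=1$); $\Lambda_{(n)}$ is the $K^n\times K^n$ diagonal matrix with diagonal entry $\lambda(v)$ at index $v$. For a $d\times N$ matrix $A$ with columns $A_1,\dots,A_N$, its $\ell$-way column product $A^{[\ell]}$ is the $d\times N^\ell$ matrix whose column indexed by $(i_1,\dots,i_\ell)\in[N]^\ell$ is $A_{i_1}\odot\cdots\odot A_{i_\ell}$. $\odot$ denotes the entrywise product; the index orderings of $c_{(n)}$, $\Lambda_{(n)}$ and the columns of $W^{[n]}$ are the same. *)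

theory Defs
  imports "HOL-Analysis.Analysis"
begin

(* Vertices: finite type 'm (the set [m]); attribute values: finite type 'k (the set [K]);
   feature dimension: finite type 'r.  Adjacency matrix A :: real^'m^'m with 0/1 entries. *)

definition onehot :: "'k::finite \<Rightarrow> real^'k" where
  "onehot u = axis u 1"

definition feat :: "real^'k::finite^'r::finite \<Rightarrow> ('m \<Rightarrow> 'k) \<Rightarrow> 'm \<Rightarrow> real^'r" where
  "feat W a i = W *v onehot (a i)"

definition hadamard :: "real^'n::finite^'p::finite \<Rightarrow> real^'n^'p \<Rightarrow> real^'n^'p" where
  "hadamard X Y = (\<chi> i j. X$i$j * Y$i$j)"

definition Smat :: "(real^'r \<Rightarrow> real^'r \<Rightarrow> real) \<Rightarrow> real^'k::finite^'r::finite \<Rightarrow> ('m::finite \<Rightarrow> 'k) \<Rightarrow> real^'m^'m" where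
  "Smat S W a = (\<chi> j i. S (feat W a j) (feat W a i))"

definition F1 :: "real^'k::finite^'r::finite \<Rightarrow> ('m::finite \<Rightarrow> 'k) \<Rightarrow> real^'m^'r" where
  "F1 W a = (\<chi> j i. feat W a i $ j)"

text \<open>F_(n) for n >= 1 (the value at n = 0 is a junk value and never used).\<close>
fun Fn :: "real^'m::finite^'m \<Rightarrow> (real^'r \<Rightarrow> real^'r \<Rightarrow> real) \<Rightarrow> real^'k::finite^'r::finite
           \<Rightarrow> ('m \<Rightarrow> 'k) \<Rightarrow> nat \<Rightarrow> real^'m^'r" where
  "Fn A S W a 0 = F1 W a"
| "Fn A S W a (Suc 0) = F1 W a"
| "Fn A S W a (Suc (Suc n)) = hadamard (Fn A S W a (Suc n) ** hadamard A (Smat S W a)) (F1 W a)"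

definition fvec :: "real^'m::finite^'m \<Rightarrow> (real^'r \<Rightarrow> real^'r \<Rightarrow> real) \<Rightarrow> real^'k::finite^'r::finite
           \<Rightarrow> ('m \<Rightarrow> 'k) \<Rightarrow> nat \<Rightarrow> real^'r" where
  "fvec A S W a n = Fn A S W a n *v (\<chi> i. 1)"

text \<open>Walk types of length n: [K]^n, represented as lists of length n.\<close>
definition walk_types :: "nat \<Rightarrow> 'k list set" where
  "walk_types n = {v. length v = n}"

definition is_walk :: "real^'m::finite^'m \<Rightarrow> 'm list \<Rightarrow> bool" where
  "is_walk A p \<longleftrightarrow> (\<forall>k. Suc k < length p \<longrightarrow> A $ (p!k) $ (p!Suc k) = 1)"

definition walk_stats :: "real^'m::finite^'m \<Rightarrow> ('m \<Rightarrow> 'k) \<Rightarrow> nat \<Rightarrow> 'k list \<Rightarrow> real" where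
  "walk_stats A a n v = real (card {p. length p = n \<and> is_walk A p \<and> map a p = v})"

definition walk_weight :: "(real^'r \<Rightarrow> real^'r \<Rightarrow> real) \<Rightarrow> real^'k::finite^'r::finite \<Rightarrow> 'k list \<Rightarrow> real" where
  "walk_weight S W v = (\<Prod>k<length v - 1. S (column (v!(Suc k)) W) (column (v!k) W))"

definition Lambda_n :: "(real^'r \<Rightarrow> real^'r \<Rightarrow> real) \<Rightarrow> real^'k::finite^'r::finite \<Rightarrow> nat
                        \<Rightarrow> 'k list \<Rightarrow> 'k list \<Rightarrow> real" where
  "Lambda_n S W n v w = (if v = w then walk_weight S W v else 0)"

text \<open>The n-way column product W^[n]: row j, column indexed by (i_1,...,i_n) is
  (W(i_1) .* ... .* W(i_n))_j  (used on column index set walk_types n).\<close>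
definition colprod :: "real^'k::finite^'r::finite \<Rightarrow> nat \<Rightarrow> 'r \<Rightarrow> 'k list \<Rightarrow> real" where
  "colprod W n j v = (\<Prod>k<n. (column (v!k) W) $ j)"

definition mv :: "'b set \<Rightarrow> ('a \<Rightarrow> 'b \<Rightarrow> real) \<Rightarrow> ('b \<Rightarrow> real) \<Rightarrow> 'a \<Rightarrow> real" where
  "mv I M x i = (\<Sum>j\<in>I. M i j * x j)"

text \<open>Concatenated objects for T >= 1.  Rows of f_[T] / M are indexed by pairs (t,j),
  t in {1..T}, j in [r]; columns of M, rows/columns of Lambda, entries of c_[T] are
  indexed by walk types of length 1..T (the disjoint union of the [K]^t).\<close>
definition walk_types_upto :: "nat \<Rightarrow> 'k list set" where
  "walk_types_upto T = {v. 1 \<le> length v \<and> length v \<le> T}"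

definition fcat :: "real^'m::finite^'m \<Rightarrow> (real^'r \<Rightarrow> real^'r \<Rightarrow> real) \<Rightarrow> real^'k::finite^'r::finite
           \<Rightarrow> ('m \<Rightarrow> 'k) \<Rightarrow> nat \<times> 'r::finite \<Rightarrow> real" where
  "fcat A S W a tj = fvec A S W a (fst tj) $ snd tj"

definition ccat :: "real^'m::finite^'m \<Rightarrow> ('m \<Rightarrow> 'k) \<Rightarrow> 'k list \<Rightarrow> real" where
  "ccat A a v = walk_stats A a (length v) v"

definition Mblk :: "real^'k::finite^'r::finite \<Rightarrow> nat \<times> 'r \<Rightarrow> 'k list \<Rightarrow> real" where
  "Mblk W tj v = (if length v = fst tj then colprod W (fst tj) (snd tj) v else 0)"

definition Lblk :: "(real^'r \<Rightarrow> real^'r \<Rightarrow> real) \<Rightarrow> real^'k::finite^'r::finite \<Rightarrow> 'k list \<Rightarrow> 'k list \<Rightarrow> real" where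
  "Lblk S W v w = (if length v = length w then Lambda_n S W (length v) v w else 0)"

end

theory Submission
  imports Defs
begin

text \<open>
  Unfolding the recursion for F_(n) writes its (j,i) entry as a sum over all vertex sequences
  of length n starting at i, each contributing the product of the j-th feature entries of its
  vertices and of the factors A_yx S(f_y, f_x) along consecutive pairs. For a 0/1 symmetric
  adjacency matrix this term vanishes unless the sequence is a walk, and then it depends only
  on the walk type v, being the j-th entry of the column v of W^[n] times lambda(v). Grouping
  the walks by type gives the first identity; the concatenated one follows because M and
  Lambda act blockwise on walk lengths.
\<close>

lemma feat_eq_column: "feat W a x = column (a x) W"
  by (simp add: vec_eq_iff feat_def onehot_def column_def matrix_vector_mult_def axis_def
      if_distrib cong: if_cong)

lemma finite_lists_of_length: "finite {q :: 'a::finite list. length q = n}"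
  using finite_lists_length_eq[of "UNIV :: 'a set" n] by simp

lemma finite_walk_types_upto: "finite (walk_types_upto T :: 'a::finite list set)"
  by (rule finite_subset[OF _ finite_lists_length_le[of "UNIV :: 'a set" T]])
    (auto simp: walk_types_upto_def)

fun seq_term :: "real^'m::finite^'m \<Rightarrow> (real^'r \<Rightarrow> real^'r \<Rightarrow> real) \<Rightarrow> real^'k::finite^'r::finite
                 \<Rightarrow> ('m \<Rightarrow> 'k) \<Rightarrow> 'r \<Rightarrow> 'm list \<Rightarrow> real" where
  "seq_term A S W a j [] = 0"
| "seq_term A S W a j [x] = feat W a x $ j"
| "seq_term A S W a j (x # y # r) =
     feat W a x $ j * (A $ y $ x * S (feat W a y) (feat W a x)) * seq_term A S W a j (y # r)"

lemma lists_Suc_with_hd: "{q. length q = Suc n \<and> hd q = i} = (\<lambda>r. i # r) ` {r. length r = n}"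
  by (auto simp: length_Suc_conv)

lemma Fn_Suc_eq_sum_seq_term:
  "Fn A S W a (Suc n) $ j $ i = (\<Sum>q | length q = Suc n \<and> hd q = i. seq_term A S W a j q)"
proof (induction n arbitrary: i)
  case 0
  have "{q. length q = Suc 0 \<and> hd q = i} = {[i]}"
    by (auto simp: length_Suc_conv)
  then show ?case by (simp add: F1_def)
next
  case (Suc n)
  let ?t = "\<lambda>l. feat W a i $ j * (A $ l $ i * S (feat W a l) (feat W a i))"
  have "(\<Sum>q | length q = Suc (Suc n) \<and> hd q = i. seq_term A S W a j q)
      = (\<Sum>r | length r = Suc n. seq_term A S W a j (i # r))"
    unfolding lists_Suc_with_hd by (subst sum.reindex) (auto simp: inj_on_def)
  also have "\<dots> = (\<Sum>r | length r = Suc n. ?t (hd r) * seq_term A S W a j r)"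
    by (rule sum.cong) (auto simp: length_Suc_conv)
  also have "\<dots> = (\<Sum>l\<in>UNIV. \<Sum>r\<in>{r\<in>{r. length r = Suc n}. hd r = l}. ?t (hd r) * seq_term A S W a j r)"
    by (rule sum.group[symmetric]) (auto simp: finite_lists_of_length)
  also have "\<dots> = (\<Sum>l\<in>UNIV. ?t l * Fn A S W a (Suc n) $ j $ l)"
    by (simp add: Suc.IH sum_distrib_left)
  also have "\<dots> = Fn A S W a (Suc (Suc n)) $ j $ i"
    by (simp add: hadamard_def matrix_matrix_mult_def Smat_def F1_def sum_distrib_left mult_ac)
  finally show ?case by simp
qed

lemma is_walk_Cons_Cons: "is_walk A (x # y # r) \<longleftrightarrow> A $ x $ y = 1 \<and> is_walk A (y # r)"
proof
  assume "is_walk A (x # y # r)"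
  then show "A $ x $ y = 1 \<and> is_walk A (y # r)"
    unfolding is_walk_def by (metis Suc_less_eq length_Cons nth_Cons_0 nth_Cons_Suc zero_less_Suc)
next
  assume "A $ x $ y = 1 \<and> is_walk A (y # r)"
  then show "is_walk A (x # y # r)"
    unfolding is_walk_def by (auto simp: less_Suc_eq_0_disj)
qed

lemma colprod_Cons: "colprod W (Suc n) j (u # v) = column u W $ j * colprod W n j v"
  unfolding colprod_def by (subst prod.lessThan_Suc_shift) simp

lemma walk_weight_Cons_Cons:
  "walk_weight S W (u # w # v) = S (column w W) (column u W) * walk_weight S W (w # v)"
  unfolding walk_weight_def by (simp del: prod.lessThan_Suc add: prod.lessThan_Suc_shift)

lemma seq_term_eq_walk_type_term:
  assumes A01: "\<forall>i j. A $ i $ j = 0 \<or> A $ i $ j = 1"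
    and Asym: "\<forall>i j. A $ i $ j = A $ j $ i"
    and "q \<noteq> []"
  shows "seq_term A S W a j q =
    (if is_walk A q then colprod W (length q) j (map a q) * walk_weight S W (map a q) else 0)"
proof -
  obtain x r where "q = x # r" using \<open>q \<noteq> []\<close> by (cases q) auto
  moreover have "seq_term A S W a j (x # r) = (if is_walk A (x # r) then 1 else 0) *
    (colprod W (length (x # r)) j (map a (x # r)) * walk_weight S W (map a (x # r)))"
  proof (induction r arbitrary: x)
    case Nil
    then show ?case by (simp add: colprod_def walk_weight_def is_walk_def feat_eq_column)
  next
    case (Cons y r)
    have "A $ y $ x = (if A $ x $ y = 1 then 1 else 0)"
      using A01 Asym by metis
    then show ?case
      by (simp only: seq_term.simps Cons.IH list.map length_Cons colprod_Cons
          walk_weight_Cons_Cons is_walk_Cons_Cons feat_eq_column) (simp add: mult_ac)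
  qed
  ultimately show ?thesis by simp
qed

lemma fvec_eq_sum_walk_types:
  fixes A :: "real^'m::finite^'m" and a :: "'m \<Rightarrow> 'k::finite"
  assumes A01: "\<forall>i j. A $ i $ j = 0 \<or> A $ i $ j = 1"
    and Asym: "\<forall>i j. A $ i $ j = A $ j $ i"
    and "n \<ge> 1"
  shows "fvec A S W a n $ j =
    (\<Sum>v\<in>walk_types n. colprod W n j v * walk_weight S W v * walk_stats A a n v)"
proof -
  obtain m where n: "n = Suc m" using \<open>n \<ge> 1\<close> by (cases n) auto
  define g where "g v = colprod W n j v * walk_weight S W v" for v
  define walks where "walks = {q. length q = n \<and> is_walk A q}"
  have "finite walks"
    unfolding walks_def by (rule finite_subset[OF _ finite_lists_of_length[of n]]) auto
  have "fvec A S W a n $ j = (\<Sum>i\<in>UNIV. \<Sum>q\<in>{q\<in>{q. length q = n}. hd q = i}. seq_term A S W a j q)"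
    by (simp add: fvec_def matrix_vector_mult_def n Fn_Suc_eq_sum_seq_term)
  also have "\<dots> = (\<Sum>q | length q = n. seq_term A S W a j q)"
    by (rule sum.group) (auto simp: finite_lists_of_length)
  also have "\<dots> = (\<Sum>q | length q = n. if is_walk A q then g (map a q) else 0)"
  proof (rule sum.cong)
    fix q :: "'m list"
    assume "q \<in> {q. length q = n}"
    then have "q \<noteq> []" using n by auto
    then show "seq_term A S W a j q = (if is_walk A q then g (map a q) else 0)"
      using \<open>q \<in> _\<close> by (simp add: g_def seq_term_eq_walk_type_term[OF A01 Asym])
  qed simp
  also have "\<dots> = (\<Sum>q\<in>walks. g (map a q))"
    using sum.inter_filter[OF finite_lists_of_length[of n], of "\<lambda>q. g (map a q)" "is_walk A"]
    by (simp add: walks_def)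
  also have "\<dots> = (\<Sum>v\<in>walk_types n. \<Sum>q\<in>{q\<in>walks. map a q = v}. g (map a q))"
    by (rule sum.group[symmetric])
      (use \<open>finite walks\<close> in \<open>auto simp: finite_lists_of_length walk_types_def walks_def\<close>)
  also have "\<dots> = (\<Sum>v\<in>walk_types n. g v * walk_stats A a n v)"
  proof (rule sum.cong)
    fix v :: "'k list"
    have "{q\<in>walks. map a q = v} = {p. length p = n \<and> is_walk A p \<and> map a p = v}"
      by (auto simp: walks_def)
    then show "(\<Sum>q\<in>{q\<in>walks. map a q = v}. g (map a q)) = g v * walk_stats A a n v"
      by (simp add: walk_stats_def)
  qed simp
  finally show ?thesis by (simp add: g_def)
qed

lemma mv_diagonal:
  assumes "finite I" and "v \<in> I"
  shows "mv I (\<lambda>v w. if v = w then d v else 0) x v = d v * x v"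
proof -
  have "mv I (\<lambda>v w. if v = w then d v else 0) x v = (\<Sum>w\<in>I. if v = w then d v * x v else 0)"
    unfolding mv_def by (rule sum.cong) auto
  with assms show ?thesis by simp
qed

lemma mv_Lambda_n:
  "v \<in> walk_types n \<Longrightarrow> mv (walk_types n) (Lambda_n S W n) c v = walk_weight S W v * c v"
  using mv_diagonal[of "walk_types n" v "walk_weight S W"]
  by (simp add: Lambda_n_def[abs_def] walk_types_def finite_lists_of_length cong: if_cong)

lemma fvec_eq_walk_representation:
  assumes "\<forall>i j. A $ i $ j = 0 \<or> A $ i $ j = 1" and "\<forall>i j. A $ i $ j = A $ j $ i" and "n \<ge> 1"
  shows "fvec A S W a n $ j =
    mv (walk_types n) (colprod W n) (mv (walk_types n) (Lambda_n S W n) (walk_stats A a n)) j"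
  by (simp add: fvec_eq_sum_walk_types[OF assms] mv_def[of "walk_types n" "colprod W n"]
      mv_Lambda_n mult.assoc cong: sum.cong)

lemma mv_Lblk:
  assumes "v \<in> walk_types_upto T"
  shows "mv (walk_types_upto T) (Lblk S W) c v = walk_weight S W v * c v"
proof -
  have "Lblk S W = (\<lambda>v w. if v = w then walk_weight S W v else 0)"
    by (auto simp: fun_eq_iff Lblk_def Lambda_n_def)
  with assms show ?thesis
    by (simp add: mv_diagonal finite_walk_types_upto)
qed

lemma walk_types_upto_with_length:
  "t \<in> {1..T} \<Longrightarrow> {v \<in> walk_types_upto T. length v = t} = walk_types t"
  by (auto simp: walk_types_upto_def walk_types_def)

lemma mv_Mblk:
  assumes "t \<in> {1..T}"
  shows "mv (walk_types_upto T) (Mblk W) y (t, j) = mv (walk_types t) (colprod W t) y j"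
proof -
  have "mv (walk_types_upto T) (Mblk W) y (t, j) =
      (\<Sum>v\<in>walk_types_upto T. if length v = t then colprod W t j v * y v else 0)"
    unfolding mv_def Mblk_def by (rule sum.cong) auto
  also have "\<dots> = (\<Sum>v\<in>walk_types t. colprod W t j v * y v)"
    by (simp add: sum.inter_filter[symmetric] finite_walk_types_upto
        walk_types_upto_with_length[OF assms])
  finally show ?thesis by (simp add: mv_def)
qed

lemma mv_Lblk_ccat:
  assumes "t \<in> {1..T}" and "v \<in> walk_types t"
  shows "mv (walk_types_upto T) (Lblk S W) (ccat A a) v =
    mv (walk_types t) (Lambda_n S W t) (walk_stats A a t) v"
proof -
  have "v \<in> walk_types_upto T" and "length v = t"
    using assms walk_types_upto_with_length by (blast, simp add: walk_types_def)
  with assms show ?thesis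
    by (simp add: mv_Lblk mv_Lambda_n ccat_def)
qed

theorem theorem1:
  fixes A :: "real^'m::finite^'m"
    and a :: "'m \<Rightarrow> 'k::finite"
    and W :: "real^'k^'r::finite"
    and S :: "real^'r \<Rightarrow> real^'r \<Rightarrow> real"
  assumes A01: "\<forall>i j. A $ i $ j = 0 \<or> A $ i $ j = 1"
    and Asym: "\<forall>i j. A $ i $ j = A $ j $ i"
  shows "(\<forall>n\<ge>1. \<forall>j. fvec A S W a n $ j
            = mv (walk_types n) (colprod W n) (mv (walk_types n) (Lambda_n S W n) (walk_stats A a n)) j)
       \<and> (\<forall>T\<ge>1. \<forall>t\<in>{1..T}. \<forall>j. fcat A S W a (t, j)
            = mv (walk_types_upto T) (Mblk W) (mv (walk_types_upto T) (Lblk S W) (ccat A a)) (t, j))"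
proof (intro conjI allI impI ballI)
  fix n :: nat and j
  assume "n \<ge> 1"
  then show "fvec A S W a n $ j
      = mv (walk_types n) (colprod W n) (mv (walk_types n) (Lambda_n S W n) (walk_stats A a n)) j"
    by (rule fvec_eq_walk_representation[OF A01 Asym])
next
  fix T t :: nat and j
  assume t: "t \<in> {1..T}"
  then have "fcat A S W a (t, j)
      = mv (walk_types t) (colprod W t) (mv (walk_types t) (Lambda_n S W t) (walk_stats A a t)) j"
    by (simp add: fcat_def fvec_eq_walk_representation[OF A01 Asym])
  also have "\<dots> = mv (walk_types t) (colprod W t) (mv (walk_types_upto T) (Lblk S W) (ccat A a)) j"
    unfolding mv_def[of "walk_types t" "colprod W t"] by (simp add: mv_Lblk_ccat[OF t])
  also have "\<dots> = mv (walk_types_upto T) (Mblk W) (mv (walk_types_upto T) (Lblk S W) (ccat A a)) (t, j)"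
    by (rule mv_Mblk[OF t, symmetric])
  finally show "fcat A S W a (t, j)
      = mv (walk_types_upto T) (Mblk W) (mv (walk_types_upto T) (Lblk S W) (ccat A a)) (t, j)" .
qed

end
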